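(* In the push-based remote estimation problem described in the context, the policy that minimizes the communication cost while guaranteeing perfect state estimation at the decoder (i.e., the decoder's belief over $s_t$ is a point mass, $\boldsymbol{\omega}_t\in\{\mathbf{e}_1,\dots,\mathbf{e}_{|\mathcal{S}|}\}$, at every time $t$) sends a message at time $t$ if and only if the current state realization $s_t$ does not correspond to the state of maximum pre-communication belief, i.e., iff $s_t\neq\arg\max_{s\in\mathcal{S}}P_{s_{t-1},s}$.
   Context: Remote estimation problem: finite state set $\mathcal{S}$, a Markov chain with a fixed transition matrix $\mathbf{P}$ ($P_{s,s'}$ the probability of moving from $s$ to $s'$), unaffected by the decoder's actions. At each time $t$ an encoder observes $s_t$ and decides $c_t\in\{0,1\}$; the decoder observes $s_t$ if $c_t=1$ and a no-transmission symbol otherwise, and outputs an estimate $a_t\in\mathcal{S}$, receiving reward $1$ if $a_t=s_t$ and $0$ otherwise; each transmission costs $\beta>0$, and costs/rewards are discounted by $\gamma\in[0,1)$. The decoder knows the encoder's policy and updates its belief over $s_t$ by Bayes' rule, including conditioning on the fact that no transmission occurred. If the decoder knows $s_{t-1}$ exactly, its pre-communication belief over $s_t$ is $\mathbf{P}^{\top}\mathbf{e}_{s_{t-1}}$, i.e., the row $P_{s_{t-1},\cdot}$; $\mathbf{e}_i$ denotes the $i$-th standard basis vector of length $|\mathcal{S}|$. *)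

theory Defs
  imports Complex_Main
begin

text \<open>
The state space is a finite type 's; P i j is the transition probability
from i to j. s0 is the state s_{-1}, known exactly to the decoder at the start.
A (general, history-dependent) encoder policy is c :: 's list => 's => bool:
c h s = True means "transmit at time t", where h = [s_{-1}, s_0, ..., s_{t-1}]
is the state history and s = s_t is the current state.
\<close>

definition stochastic :: "('s::finite \<Rightarrow> 's \<Rightarrow> real) \<Rightarrow> bool" where
  "stochastic P \<longleftrightarrow> (\<forall>i j. 0 \<le> P i j) \<and> (\<forall>i. (\<Sum>j\<in>UNIV. P i j) = 1)"

fun path_prob :: "('s \<Rightarrow> 's \<Rightarrow> real) \<Rightarrow> 's \<Rightarrow> 's list \<Rightarrow> real" where
  "path_prob P prev [] = 1"
| "path_prob P prev (x # xs) = P prev x * path_prob P x xs"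

definition silent_mass :: "('s::finite \<Rightarrow> 's \<Rightarrow> real) \<Rightarrow> ('s list \<Rightarrow> 's \<Rightarrow> bool) \<Rightarrow> 's list \<Rightarrow> real" where
  "silent_mass P c h = (\<Sum>j\<in>UNIV. if c h j then 0 else P (last h) j)"

definition silent_posterior :: "('s::finite \<Rightarrow> 's \<Rightarrow> real) \<Rightarrow> ('s list \<Rightarrow> 's \<Rightarrow> bool) \<Rightarrow> 's list \<Rightarrow> 's \<Rightarrow> real" where
  "silent_posterior P c h j = (if c h j then 0 else P (last h) j) / silent_mass P c h"

text \<open>After a transmission this is automatic; after no
  transmission (when this event has positive probability) the posterior must be some e_k.\<close>
definition perfect_estimation :: "('s::finite \<Rightarrow> 's \<Rightarrow> real) \<Rightarrow> 's \<Rightarrow> ('s list \<Rightarrow> 's \<Rightarrow> bool) \<Rightarrow> bool" where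
  "perfect_estimation P s0 c \<longleftrightarrow>
     (\<forall>xs. path_prob P s0 xs > 0 \<and> silent_mass P c (s0 # xs) > 0 \<longrightarrow>
        (\<exists>k. \<forall>j. silent_posterior P c (s0 # xs) j = (if j = k then 1 else 0)))"

definition comm_cost :: "('s::finite \<Rightarrow> 's \<Rightarrow> real) \<Rightarrow> 's \<Rightarrow> real \<Rightarrow> real \<Rightarrow> ('s list \<Rightarrow> 's \<Rightarrow> bool) \<Rightarrow> real" where
  "comm_cost P s0 \<gamma> \<beta> c =
     (\<Sum>t. \<gamma> ^ t * \<beta> *
        (\<Sum>xs\<in>{xs::'s list. length xs = t}.
           path_prob P s0 xs * (\<Sum>j\<in>UNIV. if c (s0 # xs) j then P (last (s0 # xs)) j else 0)))"

end

theory Submission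
  imports Defs
begin

text \<open>
  If the decoder's belief after a silent step is a point mass at some state k, silence can
  only occur when the current state is k, so given the history its probability is at most
  P(s_{t-1}, k), hence at most max_j P(s_{t-1}, j). The policy that is silent exactly at the
  most likely successor state attains this bound for every history and is itself perfect.
  Its transmission probability is therefore pointwise minimal, and so is the communication
  cost, a nonnegative combination of these probabilities.
\<close>

definition transmission_prob ::
    "('s::finite \<Rightarrow> 's \<Rightarrow> real) \<Rightarrow> ('s list \<Rightarrow> 's \<Rightarrow> bool) \<Rightarrow> 's list \<Rightarrow> real" where
  "transmission_prob P c h = (\<Sum>j\<in>UNIV. if c h j then P (last h) j else 0)"

definition expected_transmissions ::
    "('s::finite \<Rightarrow> 's \<Rightarrow> real) \<Rightarrow> 's \<Rightarrow> ('s list \<Rightarrow> 's \<Rightarrow> bool) \<Rightarrow> nat \<Rightarrow> real" where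
  "expected_transmissions P s0 c t =
     (\<Sum>xs\<in>{xs::'s list. length xs = t}. path_prob P s0 xs * transmission_prob P c (s0 # xs))"

lemma comm_cost_eq:
  "comm_cost P s0 \<gamma> \<beta> c = (\<Sum>t. \<gamma> ^ t * \<beta> * expected_transmissions P s0 c t)"
  by (simp add: comm_cost_def expected_transmissions_def transmission_prob_def)

lemma path_prob_nonneg: "stochastic P \<Longrightarrow> 0 \<le> path_prob P s xs"
  by (induction xs arbitrary: s) (auto simp: stochastic_def)

lemma sum_path_prob_length:
  fixes P :: "'s::finite \<Rightarrow> 's \<Rightarrow> real"
  assumes "stochastic P"
  shows "(\<Sum>xs\<in>{xs::'s list. length xs = t}. path_prob P s xs) = 1"
proof (induction t arbitrary: s)
  case 0
  then show ?case by simp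
next
  case (Suc t)
  have paths: "{xs::'s list. length xs = Suc t} = case_prod (#) ` (UNIV \<times> {xs. length xs = t})"
    by (auto simp: image_iff length_Suc_conv)
  have "inj_on (case_prod (#)) (UNIV \<times> {xs::'s list. length xs = t})"
    by (auto simp: inj_on_def)
  then have "(\<Sum>xs\<in>{xs::'s list. length xs = Suc t}. path_prob P s xs)
      = (\<Sum>x\<in>UNIV. \<Sum>xs\<in>{xs::'s list. length xs = t}. P s x * path_prob P x xs)"
    unfolding paths by (simp add: sum.reindex sum.cartesian_product case_prod_unfold)
  also have "\<dots> = (\<Sum>x\<in>UNIV. P s x)"
    by (simp add: sum_distrib_left[symmetric] Suc)
  also have "\<dots> = 1"
    using assms by (simp add: stochastic_def)
  finally show ?case .
qed

lemma transmission_prob_eq_1_minus_silent_mass: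
  assumes "stochastic P"
  shows "transmission_prob P c h = 1 - silent_mass P c h"
proof -
  have "transmission_prob P c h + silent_mass P c h = (\<Sum>j\<in>UNIV. P (last h) j)"
    unfolding transmission_prob_def silent_mass_def
    by (subst sum.distrib[symmetric]) (auto intro: sum.cong)
  then show ?thesis
    using assms by (simp add: stochastic_def)
qed

lemma transmission_prob_nonneg: "stochastic P \<Longrightarrow> 0 \<le> transmission_prob P c h"
  unfolding transmission_prob_def by (intro sum_nonneg) (auto simp: stochastic_def)

lemma transmission_prob_le_1: "stochastic P \<Longrightarrow> transmission_prob P c h \<le> 1"
  using sum_nonneg[of UNIV "\<lambda>j. if c h j then 0 else P (last h) j"]
  by (auto simp: transmission_prob_eq_1_minus_silent_mass silent_mass_def stochastic_def)

lemma expected_transmissions_nonneg: "stochastic P \<Longrightarrow> 0 \<le> expected_transmissions P s0 c t"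
  unfolding expected_transmissions_def
  by (intro sum_nonneg mult_nonneg_nonneg path_prob_nonneg transmission_prob_nonneg)

lemma expected_transmissions_le_1:
  assumes "stochastic P"
  shows "expected_transmissions P s0 c t \<le> 1"
proof -
  have "expected_transmissions P s0 c t \<le> (\<Sum>xs\<in>{xs::'a list. length xs = t}. path_prob P s0 xs)"
    unfolding expected_transmissions_def using assms
    by (intro sum_mono mult_right_le_one_le path_prob_nonneg
        transmission_prob_nonneg transmission_prob_le_1)
  then show ?thesis
    using sum_path_prob_length[OF assms] by simp
qed

lemma summable_discounted_bounded:
  fixes a :: "nat \<Rightarrow> real"
  assumes "0 \<le> \<gamma>" "\<gamma> < 1" and "\<And>t. 0 \<le> a t" "\<And>t. a t \<le> 1"
  shows "summable (\<lambda>t. \<gamma> ^ t * \<beta> * a t)"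
proof (rule summable_comparison_test)
  show "summable (\<lambda>t. \<bar>\<beta>\<bar> * \<gamma> ^ t)"
    using assms by (intro summable_mult summable_geometric) simp
  have "\<bar>\<gamma> ^ t * \<beta> * a t\<bar> \<le> \<bar>\<beta>\<bar> * \<gamma> ^ t" for t
    using assms mult_left_le[of "a t" "\<bar>\<beta>\<bar> * \<gamma> ^ t"]
    by (simp add: abs_mult mult_ac)
  then show "\<exists>N. \<forall>t\<ge>N. norm (\<gamma> ^ t * \<beta> * a t) \<le> \<bar>\<beta>\<bar> * \<gamma> ^ t"
    by simp
qed

lemma comm_cost_mono:
  assumes "stochastic P" "0 \<le> \<beta>" "0 \<le> \<gamma>" "\<gamma> < 1"
    and "\<And>t. expected_transmissions P s0 c t \<le> expected_transmissions P s0 c' t"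
  shows "comm_cost P s0 \<gamma> \<beta> c \<le> comm_cost P s0 \<gamma> \<beta> c'"
  unfolding comm_cost_eq
  using assms
  by (intro suminf_le mult_left_mono summable_discounted_bounded
      expected_transmissions_nonneg expected_transmissions_le_1) auto

lemma silent_mass_eq_if_silent_posterior_eq_1:
  "silent_posterior P c h k = 1 \<Longrightarrow> silent_mass P c h = P (last h) k"
  by (cases "c h k"; cases "silent_mass P c h = 0") (auto simp: silent_posterior_def)

lemma silent_mass_le_max:
  assumes "stochastic P" and max: "\<And>s. P (last h) s \<le> P (last h) (m (last h))"
    and point_mass: "silent_mass P c h > 0 \<Longrightarrow>
      \<exists>k. \<forall>j. silent_posterior P c h j = (if j = k then 1 else 0)"
  shows "silent_mass P c h \<le> P (last h) (m (last h))"
proof (cases "silent_mass P c h > 0")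
  case True
  then obtain k where "silent_posterior P c h k = 1"
    using point_mass by force
  then show ?thesis
    using max by (simp add: silent_mass_eq_if_silent_posterior_eq_1)
next
  case False
  then show ?thesis
    using \<open>stochastic P\<close> unfolding stochastic_def by (meson order.trans not_less)
qed

lemma silent_mass_argmax_policy:
  "silent_mass P (\<lambda>h s. s \<noteq> m (last h)) h = P (last h) (m (last h))"
proof -
  have "silent_mass P (\<lambda>h s. s \<noteq> m (last h)) h
      = (\<Sum>j\<in>UNIV. if m (last h) = j then P (last h) (m (last h)) else 0)"
    unfolding silent_mass_def by (intro sum.cong) auto
  then show ?thesis
    by simp
qed

lemma perfect_estimation_argmax_policy:
  "perfect_estimation P s0 (\<lambda>h s. s \<noteq> m (last h))"
  unfolding perfect_estimation_def
proof (intro allI impI exI)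
  fix xs j
  let ?L = "last (s0 # xs)"
  assume "0 < path_prob P s0 xs \<and> 0 < silent_mass P (\<lambda>h s. s \<noteq> m (last h)) (s0 # xs)"
  then have "P ?L (m ?L) > 0"
    by (simp only: silent_mass_argmax_policy)
  then show "silent_posterior P (\<lambda>h s. s \<noteq> m (last h)) (s0 # xs) j
      = (if j = m ?L then 1 else 0)"
    unfolding silent_posterior_def silent_mass_argmax_policy by (simp del: last.simps)
qed

lemma transmission_prob_argmax_policy_le:
  assumes "stochastic P" "\<And>s. P (last h) s \<le> P (last h) (m (last h))"
    and "silent_mass P c h > 0 \<Longrightarrow>
      \<exists>k. \<forall>j. silent_posterior P c h j = (if j = k then 1 else 0)"
  shows "transmission_prob P (\<lambda>h s. s \<noteq> m (last h)) h \<le> transmission_prob P c h"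
  using silent_mass_le_max[of P h m c] assms
  by (simp add: transmission_prob_eq_1_minus_silent_mass silent_mass_argmax_policy)

lemma expected_transmissions_argmax_policy_le:
  assumes st: "stochastic P" and max: "\<And>i s. P i s \<le> P i (m i)"
    and perfect: "perfect_estimation P s0 c"
  shows "expected_transmissions P s0 (\<lambda>h s. s \<noteq> m (last h)) t \<le> expected_transmissions P s0 c t"
  unfolding expected_transmissions_def
proof (rule sum_mono)
  fix xs :: "'a list"
  show "path_prob P s0 xs * transmission_prob P (\<lambda>h s. s \<noteq> m (last h)) (s0 # xs)
      \<le> path_prob P s0 xs * transmission_prob P c (s0 # xs)"
  proof (cases "path_prob P s0 xs > 0")
    case True
    with perfect have "transmission_prob P (\<lambda>h s. s \<noteq> m (last h)) (s0 # xs)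
        \<le> transmission_prob P c (s0 # xs)"
      by (intro transmission_prob_argmax_policy_le st max) (auto simp: perfect_estimation_def)
    with True show ?thesis
      by (simp add: mult_left_mono)
  next
    case False
    then show ?thesis
      using path_prob_nonneg[OF st, of s0 xs] by simp
  qed
qed

theorem theorem5:
  fixes P :: "'s::finite \<Rightarrow> 's \<Rightarrow> real" and s0 :: 's
    and \<gamma> \<beta> :: real and m :: "'s \<Rightarrow> 's"
  assumes "stochastic P"
    and "\<beta> > 0" and "0 \<le> \<gamma>" and "\<gamma> < 1"
    and "\<And>i s. P i s \<le> P i (m i)"
  shows "perfect_estimation P s0 (\<lambda>h s. s \<noteq> m (last h)) \<and>
         (\<forall>c. perfect_estimation P s0 c \<longrightarrow>
              comm_cost P s0 \<gamma> \<beta> (\<lambda>h s. s \<noteq> m (last h)) \<le> comm_cost P s0 \<gamma> \<beta> c)"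
proof (intro conjI allI impI)
  fix c
  assume "perfect_estimation P s0 c"
  with assms show "comm_cost P s0 \<gamma> \<beta> (\<lambda>h s. s \<noteq> m (last h)) \<le> comm_cost P s0 \<gamma> \<beta> c"
    by (intro comm_cost_mono expected_transmissions_argmax_policy_le) auto
qed (rule perfect_estimation_argmax_policy)

end
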